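(* Let $l=1$ (write $X=x\in\mathbb R$, $\bar X=0$) in the standing assumptions of the context. There exist a neighborhood $\mathcal U$ of $(0,0)$ and $C>0$ such that at every point of $\mathcal U\cap\{t>0\}$ where $\Delta>0$, \[ \frac{|\partial_x\lambda_1|}{\lambda_1}\le C\Big(\frac1{\sqrt a}+\frac1{\sqrt\Delta}\Big). \] Moreover, if $\phi>0$ is a function on a subset $\omega\subset\mathcal U\cap\{t>0\}$ with $\phi^2a\le C_0\Delta$ on $\omega$ for some $C_0>0$, then there is $C'>0$ with $|\partial_x\lambda_1|/\lambda_1\le C'/(\phi\sqrt a)$ at points of $\omega$ where $\Delta>0$.
   Context: Let $W\subset\mathbb R$ be an open interval containing $0$, $c,T>0$, and let $a(t,x),b(t,x)$ be real-valued $C^\infty$ functions on $(-c,T)\times W$ with bounded derivatives of all orders. Assume $\Delta:=4a^3-27b^2\ge0$ on $[0,T)\times W$, $a(0,0)=0$, and $a>0$ on $(0,T)\times W$. Let $S=\begin{bmatrix}3&0&-a\\0&2a&3b\\-a&3b&a^2\end{bmatrix}$ with eigenvalues $0\le\lambda_1\le\lambda_2\le\lambda_3$ (smooth on $\mathcal U\cap\{t>0\}$ for $\mathcal U$ a small neighborhood of $(0,0)$). *)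

theory Defs
  imports "HOL-Analysis.Analysis"
begin

text \<open>Iterated partial derivatives of a function of (t,x). A list entry True means
  differentiation in t, False means differentiation in x; the head of the list is the
  last derivative applied.\<close>
fun ipd :: "bool list \<Rightarrow> (real \<Rightarrow> real \<Rightarrow> real) \<Rightarrow> real \<Rightarrow> real \<Rightarrow> real" where
  "ipd [] f = f"
| "ipd (True # ds) f = (\<lambda>t x. deriv (\<lambda>s. ipd ds f s x) t)"
| "ipd (False # ds) f = (\<lambda>t x. deriv (\<lambda>y. ipd ds f t y) x)"

definition smooth_bdd :: "(real \<times> real) set \<Rightarrow> (real \<Rightarrow> real \<Rightarrow> real) \<Rightarrow> bool" where
  "smooth_bdd Om f \<longleftrightarrow>
     (\<forall>ds. continuous_on Om (\<lambda>p. ipd ds f (fst p) (snd p))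
        \<and> (\<forall>t x. (t, x) \<in> Om \<longrightarrow>
              (\<lambda>s. ipd ds f s x) differentiable (at t)
            \<and> (\<lambda>y. ipd ds f t y) differentiable (at x))
        \<and> (\<exists>M. \<forall>t x. (t, x) \<in> Om \<longrightarrow> \<bar>ipd ds f t x\<bar> \<le> M))"

definition Smat :: "real \<Rightarrow> real \<Rightarrow> real^3^3" where
  "Smat a b = vector [vector [3, 0, - a], vector [0, 2 * a, 3 * b], vector [- a, 3 * b, a ^ 2]]"

definition is_eigenvalue :: "real^'n^'n \<Rightarrow> real \<Rightarrow> bool" where
  "is_eigenvalue M l \<longleftrightarrow> (\<exists>v. v \<noteq> 0 \<and> M *v v = l *s v)"

definition lam1 :: "(real \<Rightarrow> real \<Rightarrow> real) \<Rightarrow> (real \<Rightarrow> real \<Rightarrow> real) \<Rightarrow> real \<Rightarrow> real \<Rightarrow> real" where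
  "lam1 a b t x = Min {l. is_eigenvalue (Smat (a t x) (b t x)) l}"

definition Disc :: "(real \<Rightarrow> real \<Rightarrow> real) \<Rightarrow> (real \<Rightarrow> real \<Rightarrow> real) \<Rightarrow> real \<Rightarrow> real \<Rightarrow> real" where
  "Disc a b t x = 4 * (a t x) ^ 3 - 27 * (b t x) ^ 2"

end

theory Submission
  imports Defs
begin

text \<open>The eigenvalues of \<open>S\<close> are the roots of the cubic \<open>P(\<lambda>) = det (\<lambda> - S)\<close>, whose
  constant term is \<open>-\<Delta>\<close>. For \<open>0 < a \<le> 1/8\<close> and \<open>\<Delta> > 0\<close> the cubic is negative on
  \<open>(-\<infinity>, 0]\<close> and positive at \<open>\<Delta>/(3a)\<close>, so \<open>\<lambda>\<^sub>1 \<le> \<Delta>/(3a) \<le> 4a\<^sup>2/3\<close> is a simple root with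
  \<open>\<partial>\<^sub>\<lambda>P(\<lambda>\<^sub>1) \<ge> 4a\<close> and \<open>\<lambda>\<^sub>1 \<partial>\<^sub>\<lambda>P(\<lambda>\<^sub>1) \<ge> \<Delta>/2\<close>. Implicit differentiation expresses
  \<open>\<partial>\<^sub>x\<lambda>\<^sub>1/\<lambda>\<^sub>1\<close> through \<open>\<partial>\<^sub>xa\<close>, \<open>\<partial>\<^sub>xb\<close> and \<open>\<partial>\<^sub>x\<Delta>\<close>, and Glaeser's inequality for the nonnegative
  functions \<open>a\<close> and \<open>\<Delta>\<close> gives \<open>|\<partial>\<^sub>xa| \<lesssim> \<surd>a\<close>, \<open>|\<partial>\<^sub>x\<Delta>| \<lesssim> \<surd>\<Delta>\<close>; this yields the bound
  \<open>C (1/\<surd>a + 1/\<surd>\<Delta>)\<close> wherever \<open>a < 1/8\<close>, i.e. near the origin.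
  For the weighted bound, \<open>\<phi>\<^sup>2a \<le> C\<^sub>0\<Delta> \<le> 4C\<^sub>0a\<^sup>3\<close> forces \<open>\<phi> \<le> \<surd>C\<^sub>0\<close>, and
  \<open>1/\<surd>\<Delta> \<le> \<surd>C\<^sub>0/(\<phi>\<surd>a)\<close>.\<close>

section \<open>The characteristic polynomial of S and its smallest root\<close>

definition charpoly_S :: "real \<Rightarrow> real \<Rightarrow> real \<Rightarrow> real" where
  "charpoly_S a b l =
     l^3 - (3 + 2*a + a^2) * l^2 + (6*a + 2*a^2 + 2*a^3 - 9*b^2) * l - (4*a^3 - 27*b^2)"

definition charpoly_S_deriv :: "real \<Rightarrow> real \<Rightarrow> real \<Rightarrow> real" where
  "charpoly_S_deriv a b l = 3*l^2 - 2*(3 + 2*a + a^2) * l + (6*a + 2*a^2 + 2*a^3 - 9*b^2)"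

definition lam_min :: "real \<Rightarrow> real \<Rightarrow> real" where
  "lam_min a b = Min {l. charpoly_S a b l = 0}"

lemma is_eigenvalue_Smat_iff: "is_eigenvalue (Smat a b) l \<longleftrightarrow> charpoly_S a b l = 0"
proof -
  have "is_eigenvalue (Smat a b) l \<longleftrightarrow> (\<exists>v. v \<noteq> 0 \<and> (Smat a b - l *\<^sub>R mat 1) *v v = 0)"
    unfolding is_eigenvalue_def
    by (simp add: matrix_vector_mult_diff_rdistrib scalar_mult_eq_scaleR flip: scaleR_matrix_vector_assoc)
  also have "\<dots> \<longleftrightarrow> \<not> invertible (Smat a b - l *\<^sub>R mat 1)"
    unfolding invertible_left_inverse matrix_left_invertible_ker by auto
  also have "\<dots> \<longleftrightarrow> det (Smat a b - l *\<^sub>R mat 1) = 0"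
    by (simp add: invertible_det_nz)
  also have "det (Smat a b - l *\<^sub>R mat 1) = - charpoly_S a b l"
    unfolding det_3 Smat_def charpoly_S_def by (simp add: mat_def) algebra
  finally show ?thesis by simp
qed

lemma lam1_eq_lam_min: "lam1 a b t x = lam_min (a t x) (b t x)"
  unfolding lam1_def lam_min_def is_eigenvalue_Smat_iff ..

lemma finite_charpoly_S_roots: "finite {l. charpoly_S a b l = 0}"
proof -
  have "{l. charpoly_S a b l = 0} = {l. poly [:-(4*a^3 - 27*b^2), 6*a + 2*a^2 + 2*a^3 - 9*b^2,
      -(3 + 2*a + a^2), 1:] l = 0}"
    unfolding charpoly_S_def by (auto simp: algebra_simps power2_eq_square power3_eq_cube)
  also have "finite \<dots>" by (rule poly_roots_finite) simp
  finally show ?thesis .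
qed

context
  fixes a b :: real
  assumes a_pos: "0 < a" and a_small: "a \<le> 1/8" and disc_pos: "0 < 4*a^3 - 27*b^2"
begin

lemma b_sq_le: "9*b^2 \<le> 2*a^3"
proof -
  have "0 < a^3" using a_pos by simp
  then show ?thesis using disc_pos by linarith
qed

lemma a_sq_le: "a^2 \<le> a/8"
  using a_pos a_small by (simp add: power2_eq_square)

lemma charpoly_S_neg: "l \<le> 0 \<Longrightarrow> charpoly_S a b l < 0"
proof -
  assume l: "l \<le> 0"
  have "0 \<le> a^2" by simp
  then have "0 \<le> 6*a + 2*a^2 + 2*a^3 - 9*b^2" using b_sq_le a_pos by linarith
  then have "(6*a + 2*a^2 + 2*a^3 - 9*b^2) * l \<le> 0" using l by (simp add: mult_nonneg_nonpos)
  moreover have "l^3 \<le> 0" using l by (simp add: power3_eq_cube mult_nonneg_nonpos)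
  moreover have "0 \<le> (3 + 2*a + a^2) * l^2" using a_pos by (simp add: add_nonneg_nonneg)
  ultimately show ?thesis unfolding charpoly_S_def using disc_pos by linarith
qed

lemma charpoly_S_pos: "0 < charpoly_S a b ((4*a^3 - 27*b^2) / (3*a))"
proof -
  define D where "D = 4*a^3 - 27*b^2"
  define l where "l = D / (3*a)"
  have l_pos: "0 < l" using a_pos disc_pos unfolding l_def D_def by simp
  have "D \<le> 4*a^3" unfolding D_def by simp
  then have l_le: "l \<le> 4*a^2/3"
    unfolding l_def using a_pos by (simp add: divide_simps power2_eq_square power3_eq_cube)
  have "(3 + 2*a + a^2) * l \<le> 4 * (4*a^2/3)"
    using a_sq_le a_small l_le l_pos a_pos by (intro mult_mono) (auto simp: add_nonneg_nonneg)
  moreover have "6*a \<le> 6*a + 2*a^2 + 2*a^3 - 9*b^2"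
    using b_sq_le zero_le_power2[of a] by linarith
  moreover have "4 * (4*a^2/3) \<le> 3*a/2" using a_sq_le a_pos by linarith
  moreover have "0 \<le> l^2" by simp
  ultimately have "3*a + 3*a/2 \<le> l^2 - (3 + 2*a + a^2) * l + (6*a + 2*a^2 + 2*a^3 - 9*b^2)"
    by linarith
  then have "l * (3*a + 3*a/2) \<le> l * (l^2 - (3 + 2*a + a^2) * l + (6*a + 2*a^2 + 2*a^3 - 9*b^2))"
    using l_pos by simp
  moreover have "charpoly_S a b l = l * (l^2 - (3 + 2*a + a^2) * l + (6*a + 2*a^2 + 2*a^3 - 9*b^2)) - D"
    unfolding charpoly_S_def D_def by (simp add: algebra_simps power2_eq_square power3_eq_cube)
  moreover have "l * (3*a) = D" unfolding l_def using a_pos by simp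
  moreover have "0 < l * (3*a/2)" using l_pos a_pos by simp
  ultimately have "0 < charpoly_S a b l" by (simp add: algebra_simps)
  then show ?thesis unfolding l_def D_def .
qed

lemma lam_min_root:
  shows "charpoly_S a b (lam_min a b) = 0" and "0 < lam_min a b"
    and "lam_min a b \<le> (4*a^3 - 27*b^2) / (3*a)"
proof -
  define l where "l = (4*a^3 - 27*b^2) / (3*a)"
  have l_nonneg: "0 \<le> l" unfolding l_def using a_pos disc_pos by simp
  have "\<forall>y. 0 \<le> y \<and> y \<le> l \<longrightarrow> isCont (charpoly_S a b) y"
    unfolding charpoly_S_def by (auto intro!: continuous_intros)
  then obtain y where y: "0 \<le> y" "y \<le> l" "charpoly_S a b y = 0"
    using IVT[of "charpoly_S a b" 0 0 l] charpoly_S_neg[of 0] charpoly_S_pos l_nonneg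
    unfolding l_def by force
  then have nonempty: "{l. charpoly_S a b l = 0} \<noteq> {}" by auto
  show root: "charpoly_S a b (lam_min a b) = 0"
    unfolding lam_min_def using Min_in[OF finite_charpoly_S_roots nonempty] by simp
  then show "0 < lam_min a b"
    using charpoly_S_neg[of "lam_min a b"] by (cases "lam_min a b \<le> 0") auto
  have "lam_min a b \<le> y" unfolding lam_min_def using y finite_charpoly_S_roots by auto
  with y show "lam_min a b \<le> (4*a^3 - 27*b^2) / (3*a)" unfolding l_def by simp
qed

lemma lam_min_le: "lam_min a b \<le> 4*a^2/3"
proof -
  have "(4*a^3 - 27*b^2) / (3*a) \<le> 4*a^3 / (3*a)"
    using a_pos by (intro divide_right_mono) auto
  also have "\<dots> = 4*a^2/3" using a_pos by (simp add: power2_eq_square power3_eq_cube)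
  finally show ?thesis using lam_min_root(3) by linarith
qed

lemma charpoly_S_deriv_lam_min:
  shows "4*a \<le> charpoly_S_deriv a b (lam_min a b)"
    and "(4*a^3 - 27*b^2) / 2 \<le> lam_min a b * charpoly_S_deriv a b (lam_min a b)"
proof -
  define D where "D = 4*a^3 - 27*b^2"
  define r where "r = lam_min a b"
  have r_pos: "0 < r" and r_le: "r \<le> 4*a^2/3" and r_le': "r \<le> D / (3*a)"
    using lam_min_root lam_min_le unfolding r_def D_def by auto
  have coeff_le: "3 + 2*a + a^2 \<le> 4" and coeff_pos: "0 < 3 + 2*a + a^2"
    using a_pos a_small a_sq_le by (auto simp: add_pos_nonneg)
  have "(3 + 2*a + a^2) * r \<le> 4 * (4*a^2/3)"
    using coeff_le r_le r_pos by (intro mult_mono) auto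
  moreover have "4 * (4*a^2/3) \<le> a" using a_sq_le a_pos by linarith
  moreover have "6*a \<le> 6*a + 2*a^2 + 2*a^3 - 9*b^2"
    using b_sq_le zero_le_power2[of a] by linarith
  moreover have "0 \<le> r^2" by simp
  ultimately show "4*a \<le> charpoly_S_deriv a b (lam_min a b)"
    unfolding charpoly_S_deriv_def r_def[symmetric] by linarith
  have "r^2 \<le> r * (D / (3*a))"
    using r_le' r_pos unfolding power2_eq_square by (intro mult_left_mono) auto
  also have "\<dots> \<le> (4*a^2/3) * (D / (3*a))"
    using r_le a_pos disc_pos unfolding D_def by (intro mult_right_mono) auto
  also have "\<dots> = 4*a*D/9" using a_pos by (simp add: power2_eq_square)
  finally have "(3 + 2*a + a^2) * r^2 \<le> 4 * (4*a*D/9)"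
    using coeff_le coeff_pos by (intro mult_mono) auto
  moreover have "4 * (4*a*D/9) \<le> D/2"
    using a_small disc_pos unfolding D_def[symmetric] by (simp add: mult_right_mono)
  moreover have "0 \<le> r^3" using r_pos by simp
  moreover have "r * charpoly_S_deriv a b r = 2*r^3 - (3 + 2*a + a^2) * r^2 + D"
    using lam_min_root(1) unfolding r_def[symmetric] charpoly_S_def charpoly_S_deriv_def D_def
    by (simp add: algebra_simps power2_eq_square power3_eq_cube)
  ultimately show "(4*a^3 - 27*b^2) / 2 \<le> lam_min a b * charpoly_S_deriv a b (lam_min a b)"
    unfolding r_def[symmetric] D_def[symmetric] by linarith
qed

lemma charpoly_S_coeff_margin: "4*a \<le> (6*a + 2*a^2 + 2*a^3 - 9*b^2) - 2 * (3 + 2*a + a^2) * (2*a^2)"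
proof -
  have "(3 + 2*a + a^2) * (2*a^2) \<le> 4 * (2*a^2)"
    using a_pos a_small a_sq_le by (intro mult_right_mono) auto
  then show ?thesis using a_sq_le b_sq_le zero_le_power2[of a] by linarith
qed

lemma abs_b_le: "\<bar>b\<bar> \<le> a * sqrt a"
proof -
  have "\<bar>b\<bar> = sqrt (b^2)" by simp
  also have "\<dots> \<le> sqrt (a^3)"
  proof (rule real_sqrt_le_mono)
    have "0 < a^3" using a_pos by simp
    then show "b^2 \<le> a^3" using b_sq_le by linarith
  qed
  also have "sqrt (a^3) = a * sqrt a" using a_pos by (simp add: power3_eq_cube real_sqrt_mult)
  finally show ?thesis .
qed

lemma lam_min_deriv_term1_le:
  assumes "\<bar>a'\<bar> \<le> K1"
  shows "\<bar>(2 + 2*a)*a'\<bar> * lam_min a b / charpoly_S_deriv a b (lam_min a b) \<le> K1 / sqrt a"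
proof -
  have K1: "0 \<le> K1" using assms by linarith
  have "\<bar>(2 + 2*a)*a'\<bar> \<le> 3 * K1"
    unfolding abs_mult using a_pos a_small assms K1 by (intro mult_mono) auto
  moreover have "lam_min a b / charpoly_S_deriv a b (lam_min a b) \<le> (4*a^2/3) / (4*a)"
    using lam_min_le lam_min_root(2) charpoly_S_deriv_lam_min(1) a_pos by (intro frac_le) auto
  then have "lam_min a b / charpoly_S_deriv a b (lam_min a b) \<le> a/3"
    using a_pos by (simp add: power2_eq_square)
  ultimately have "\<bar>(2 + 2*a)*a'\<bar> * (lam_min a b / charpoly_S_deriv a b (lam_min a b)) \<le> 3 * K1 * (a/3)"
    using lam_min_root(2) charpoly_S_deriv_lam_min(1) a_pos by (intro mult_mono) auto
  also have "\<dots> \<le> K1" using K1 a_small a_pos by (simp add: mult_left_le)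
  also have "\<dots> \<le> K1 / sqrt a" using K1 a_pos a_small by (simp add: le_divide_eq mult_left_le)
  finally show ?thesis by simp
qed

lemma lam_min_deriv_term2_le:
  assumes a': "\<bar>a'\<bar> \<le> Ka * sqrt a" and b': "\<bar>b'\<bar> \<le> K2"
  shows "\<bar>(6 + 4*a + 6*a^2)*a' - 18*b*b'\<bar> / charpoly_S_deriv a b (lam_min a b) \<le> (2*Ka + 5*K2) / sqrt a"
proof -
  define s where "s = sqrt a"
  have s_pos: "0 < s" and s_sq: "s * s = a" using a_pos unfolding s_def by simp_all
  have Ka: "0 \<le> Ka" using order_trans[OF abs_ge_zero a'] s_pos unfolding s_def[symmetric]
    by (simp add: zero_le_mult_iff)
  have K2: "0 \<le> K2" using b' by linarith
  have "\<bar>(6 + 4*a + 6*a^2)*a' - 18*b*b'\<bar> \<le> \<bar>6 + 4*a + 6*a^2\<bar> * \<bar>a'\<bar> + 18 * (\<bar>b\<bar> * \<bar>b'\<bar>)"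
    using abs_triangle_ineq4[of "(6 + 4*a + 6*a^2)*a'" "18*b*b'"] by (simp add: abs_mult)
  also have "\<dots> \<le> 7 * (Ka * s) + 18 * ((a * s) * K2)"
  proof (rule add_mono)
    show "\<bar>6 + 4*a + 6*a^2\<bar> * \<bar>a'\<bar> \<le> 7 * (Ka * s)"
      using a_pos a_small a_sq_le a' unfolding s_def by (intro mult_mono) auto
    show "18 * (\<bar>b\<bar> * \<bar>b'\<bar>) \<le> 18 * ((a * s) * K2)"
      using abs_b_le b' a_pos s_pos unfolding s_def by (simp add: mult_mono)
  qed
  also have "\<dots> \<le> s * (4 * (2*Ka + 5*K2))"
  proof -
    have "a*K2 \<le> (1/8)*K2" using K2 a_small by (intro mult_right_mono) auto
    then have "8*(a*K2) \<le> K2" by simp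
    then have "7*Ka + 18*(a*K2) \<le> 4 * (2*Ka + 5*K2)" using Ka K2 by (smt (verit))
    then have "s * (7*Ka + 18*(a*K2)) \<le> s * (4 * (2*Ka + 5*K2))" using s_pos by simp
    then show ?thesis by (simp add: algebra_simps)
  qed
  also have "\<dots> = 4*a * ((2*Ka + 5*K2) / s)" using s_pos by (simp add: field_simps flip: s_sq)
  finally have num: "\<bar>(6 + 4*a + 6*a^2)*a' - 18*b*b'\<bar> \<le> 4*a * ((2*Ka + 5*K2) / s)" .
  have "\<bar>(6 + 4*a + 6*a^2)*a' - 18*b*b'\<bar> / charpoly_S_deriv a b (lam_min a b)
      \<le> \<bar>(6 + 4*a + 6*a^2)*a' - 18*b*b'\<bar> / (4*a)"
    using charpoly_S_deriv_lam_min(1) a_pos by (intro divide_left_mono) auto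
  also have "\<dots> \<le> (2*Ka + 5*K2) / s" using num a_pos by (simp add: divide_le_eq mult.commute)
  finally show ?thesis unfolding s_def .
qed

lemma lam_min_deriv_term3_le:
  assumes "\<bar>D'\<bar> \<le> Kd * sqrt (4*a^3 - 27*b^2)"
  shows "\<bar>D'\<bar> / (lam_min a b * charpoly_S_deriv a b (lam_min a b)) \<le> 2 * Kd / sqrt (4*a^3 - 27*b^2)"
proof -
  have "0 \<le> Kd" using order_trans[OF abs_ge_zero assms] disc_pos by (simp add: zero_le_mult_iff)
  then have "\<bar>D'\<bar> / (lam_min a b * charpoly_S_deriv a b (lam_min a b))
      \<le> Kd * sqrt (4*a^3 - 27*b^2) / ((4*a^3 - 27*b^2) / 2)"
    using assms charpoly_S_deriv_lam_min(2) disc_pos by (intro frac_le) auto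
  also have "\<dots> = 2 * Kd / sqrt (4*a^3 - 27*b^2)" using disc_pos by (simp add: field_simps)
  finally show ?thesis .
qed

text \<open>The quotient on the left is \<open>\<lambda>\<^sub>1'/\<lambda>\<^sub>1\<close> as given by implicit differentiation of
  \<open>charpoly_S\<close> (lemma \<open>lam_min_has_derivative\<close> below), with \<open>a'\<close>, \<open>b'\<close>, \<open>D'\<close> the
  derivatives of \<open>a\<close>, \<open>b\<close> and of the discriminant.\<close>
lemma lam_min_log_deriv_le:
  assumes "\<bar>a'\<bar> \<le> Ka * sqrt a" "\<bar>a'\<bar> \<le> K1" "\<bar>b'\<bar> \<le> K2"
    and "\<bar>D'\<bar> \<le> Kd * sqrt (4*a^3 - 27*b^2)"
  shows "\<bar>((2 + 2*a)*a' * (lam_min a b)^2 - ((6 + 4*a + 6*a^2)*a' - 18*b*b') * lam_min a b + D')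
      / charpoly_S_deriv a b (lam_min a b)\<bar> / lam_min a b
    \<le> (K1 + 2*Ka + 5*K2 + 2*Kd) * (1 / sqrt a + 1 / sqrt (4*a^3 - 27*b^2))"
proof -
  define r where "r = lam_min a b"
  define P where "P = charpoly_S_deriv a b r"
  have r: "0 < r" and P: "0 < P"
    using lam_min_root(2) charpoly_S_deriv_lam_min(1) a_pos unfolding r_def P_def by auto
  have "\<bar>((2 + 2*a)*a' * r^2 - ((6 + 4*a + 6*a^2)*a' - 18*b*b') * r + D') / P\<bar> / r
      = \<bar>(2 + 2*a)*a' * r^2 - ((6 + 4*a + 6*a^2)*a' - 18*b*b') * r + D'\<bar> / (r * P)"
    using r P by (simp add: abs_div field_simps)
  also have "\<dots> \<le> (\<bar>(2 + 2*a)*a'\<bar> * r^2 + \<bar>(6 + 4*a + 6*a^2)*a' - 18*b*b'\<bar> * r + \<bar>D'\<bar>) / (r * P)"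
    using r P by (intro divide_right_mono)
      (auto simp: abs_mult intro!: order_trans[OF abs_triangle_ineq] order_trans[OF abs_triangle_ineq4] add_mono)
  also have "\<dots> = \<bar>(2 + 2*a)*a'\<bar> * r / P + \<bar>(6 + 4*a + 6*a^2)*a' - 18*b*b'\<bar> / P + \<bar>D'\<bar> / (r * P)"
    using r P by (simp add: field_simps power2_eq_square)
  also have "\<dots> \<le> K1 / sqrt a + (2*Ka + 5*K2) / sqrt a + 2 * Kd / sqrt (4*a^3 - 27*b^2)"
    using lam_min_deriv_term1_le lam_min_deriv_term2_le lam_min_deriv_term3_le assms
    unfolding r_def P_def by (meson add_mono)
  also have "\<dots> = (K1 + 2*Ka + 5*K2) * (1 / sqrt a) + 2*Kd * (1 / sqrt (4*a^3 - 27*b^2))"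
    by (simp add: field_split_simps)
  also have "\<dots> \<le> (K1 + 2*Ka + 5*K2 + 2*Kd) * (1 / sqrt a + 1 / sqrt (4*a^3 - 27*b^2))"
  proof -
    have "0 \<le> K1" "0 \<le> K2" using assms by linarith+
    moreover have "0 \<le> Ka" "0 \<le> Kd"
      using order_trans[OF abs_ge_zero assms(1)] order_trans[OF abs_ge_zero assms(4)] a_pos disc_pos
      by (simp_all add: zero_le_mult_iff)
    moreover have "0 \<le> 1 / sqrt a" "0 \<le> 1 / sqrt (4*a^3 - 27*b^2)" using a_pos disc_pos by auto
    ultimately have "(K1 + 2*Ka + 5*K2) * (1 / sqrt a) \<le> (K1 + 2*Ka + 5*K2 + 2*Kd) * (1 / sqrt a)"
        "2*Kd * (1 / sqrt (4*a^3 - 27*b^2)) \<le> (K1 + 2*Ka + 5*K2 + 2*Kd) * (1 / sqrt (4*a^3 - 27*b^2))"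
      by (intro mult_right_mono; simp)+
    then show ?thesis unfolding distrib_left by (rule add_mono)
  qed
  finally show ?thesis unfolding r_def P_def .
qed

lemma inv_sqrt_add_inv_sqrt_disc_le:
  assumes p: "0 < p" and C0: "0 < C0" and weight: "p^2 * a \<le> C0 * (4*a^3 - 27*b^2)"
  shows "1 / sqrt a + 1 / sqrt (4*a^3 - 27*b^2) \<le> 2 * sqrt C0 / (p * sqrt a)"
proof -
  have "C0 * (4*a^3 - 27*b^2) \<le> C0 * (4*a^3)" using C0 by (intro mult_left_mono) auto
  then have "p^2 * a \<le> (4*C0*a^2) * a"
    using weight by (simp add: power2_eq_square power3_eq_cube algebra_simps)
  then have "p^2 \<le> 4*C0*a^2" using a_pos by simp
  moreover have "4*C0*a^2 \<le> C0" using a_sq_le a_small C0 by simp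
  ultimately have "p \<le> sqrt C0" using p real_le_rsqrt by fastforce
  then have inv_a: "1 / sqrt a \<le> sqrt C0 / (p * sqrt a)" using p a_pos by (simp add: divide_simps)
  have "sqrt (p^2 * a) \<le> sqrt (C0 * (4*a^3 - 27*b^2))" using weight by (rule real_sqrt_le_mono)
  then have "p * sqrt a \<le> sqrt C0 * sqrt (4*a^3 - 27*b^2)" using p by (simp add: real_sqrt_mult)
  then have inv_disc: "1 / sqrt (4*a^3 - 27*b^2) \<le> sqrt C0 / (p * sqrt a)"
    using p a_pos disc_pos by (simp add: divide_simps mult.commute)
  have double: "sqrt C0 / (p * sqrt a) + sqrt C0 / (p * sqrt a) = 2 * sqrt C0 / (p * sqrt a)" by simp
  show ?thesis using add_mono[OF inv_a inv_disc] unfolding double .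
qed

end

section \<open>Glaeser's inequality\<close>

lemma taylor_second_order_upper:
  fixes f f' f'' :: "real \<Rightarrow> real"
  assumes "\<And>y. y \<in> {x-h..x+h} \<Longrightarrow> (f has_real_derivative f' y) (at y)"
    and "\<And>y. y \<in> {x-h..x+h} \<Longrightarrow> (f' has_real_derivative f'' y) (at y)"
    and "\<And>y. y \<in> {x-h..x+h} \<Longrightarrow> f'' y \<le> M"
    and "\<bar>s\<bar> \<le> h"
  shows "f (x + s) \<le> f x + s * f' x + M * s^2 / 2"
proof (cases "s = 0")
  case False
  define diff where "diff = (\<lambda>m::nat. if m = 0 then f else if m = 1 then f' else f'')"
  have "\<forall>m t. m < 2 \<and> x - h \<le> t \<and> t \<le> x + h \<longrightarrow> DERIV (diff m) t :> diff (Suc m) t"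
    using assms(1,2) unfolding diff_def by (auto simp: less_2_cases_iff)
  then obtain t where t: "if x + s < x then x + s < t \<and> t < x else x < t \<and> t < x + s"
    "f (x + s) = (\<Sum>m<2. (diff m x / fact m) * (x + s - x)^m) + (diff 2 t / fact 2) * (x + s - x)^2"
    using Taylor[of 2 diff f "x - h" "x + h" x "x + s"] assms(4) False unfolding diff_def
    by (auto simp: abs_le_iff)
  have "t \<in> {x-h..x+h}" using t(1) assms(4) by (auto simp: abs_le_iff split: if_splits)
  then have "f'' t * s^2 \<le> M * s^2" using assms(3) by (simp add: mult_right_mono)
  moreover have "f (x + s) = f x + f' x * s + f'' t / 2 * s^2"
    using t(2) by (simp add: diff_def numeral_2_eq_2)
  ultimately show ?thesis by (simp add: algebra_simps)
qed simp

definition glaeser_const :: "real \<Rightarrow> real \<Rightarrow> real \<Rightarrow> real" where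
  "glaeser_const M F h = sqrt (2*M) + 2 * sqrt F / h"

lemma glaeser_const_pos: "0 \<le> M \<Longrightarrow> 0 < F \<Longrightarrow> 0 < h \<Longrightarrow> 0 < glaeser_const M F h"
  unfolding glaeser_const_def by (simp add: add_nonneg_pos)

text \<open>Test the second-order Taylor bound at the minimiser \<open>s = -f' x / M\<close>
  of its right-hand side if this lies within distance \<open>h\<close>, and at \<open>s = \<mp>h\<close> otherwise.\<close>
lemma glaeser_inequality:
  fixes f f' f'' :: "real \<Rightarrow> real"
  assumes h: "0 < h" and M: "0 \<le> M"
    and nonneg: "\<And>y. y \<in> {x-h..x+h} \<Longrightarrow> 0 \<le> f y"
    and f': "\<And>y. y \<in> {x-h..x+h} \<Longrightarrow> (f has_real_derivative f' y) (at y)"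
    and f'': "\<And>y. y \<in> {x-h..x+h} \<Longrightarrow> (f' has_real_derivative f'' y) (at y)"
    and bound: "\<And>y. y \<in> {x-h..x+h} \<Longrightarrow> \<bar>f'' y\<bar> \<le> M"
    and F: "f x \<le> F"
  shows "\<bar>f' x\<bar> \<le> glaeser_const M F h * sqrt (f x)"
proof -
  define v where "v = f' x"
  define p where "p = f x"
  have taylor: "0 \<le> p + s * v + M * s^2 / 2" if "\<bar>s\<bar> \<le> h" for s
  proof -
    have "0 \<le> f (x + s)" using nonneg that by (auto simp: abs_le_iff)
    with taylor_second_order_upper[OF f' f'' _ that] bound show ?thesis
      unfolding p_def v_def by (smt (verit) abs_le_iff)
  qed
  have p_nonneg: "0 \<le> p" unfolding p_def using nonneg h by auto
  then have sqrt_p: "0 \<le> sqrt p" by simp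
  have glaeser_nonneg: "0 \<le> sqrt (2*M)" "0 \<le> 2 * sqrt F / h"
    using M h F p_nonneg unfolding p_def by auto
  show ?thesis
  proof (cases "\<bar>v\<bar> \<le> M * h")
    case True
    show ?thesis
    proof (cases "v = 0")
      case False
      with True M have M_pos: "0 < M" by (cases "M = 0") auto
      then have "\<bar>- v / M\<bar> \<le> h" using True by (simp add: divide_simps mult.commute)
      from taylor[OF this] have "0 \<le> p - v^2 / (2*M)"
        using M_pos by (simp add: field_simps power2_eq_square)
      then have "v^2 \<le> 2*M*p" using M_pos by (simp add: field_simps)
      then have "sqrt (v^2) \<le> sqrt (2*M*p)" by (rule real_sqrt_le_mono)
      then have "\<bar>v\<bar> \<le> sqrt (2*M) * sqrt p" by (simp add: real_sqrt_mult)
      also have "\<dots> \<le> glaeser_const M F h * sqrt p"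
        unfolding glaeser_const_def using sqrt_p glaeser_nonneg by (intro mult_right_mono) auto
      finally show ?thesis unfolding v_def p_def .
    qed (use sqrt_p glaeser_nonneg in \<open>auto simp: v_def p_def glaeser_const_def\<close>)
  next
    case False
    define s where "s = (if v \<ge> 0 then - h else h)"
    have "\<bar>s\<bar> \<le> h" "s * v = - h * \<bar>v\<bar>" "s^2 = h^2" using h unfolding s_def by auto
    with taylor have "0 \<le> p - h * \<bar>v\<bar> + M * h^2 / 2" by force
    moreover have "M * h^2 / 2 \<le> h * \<bar>v\<bar> / 2" using False h by (simp add: power2_eq_square)
    ultimately have "\<bar>v\<bar> \<le> 2 * p / h" using h by (simp add: field_simps)
    also have "p = sqrt p * sqrt p" using p_nonneg by simp
    also have "\<dots> \<le> sqrt F * sqrt p" using F sqrt_p unfolding p_def by (intro mult_right_mono) auto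
    finally have "\<bar>v\<bar> \<le> 2 * sqrt F / h * sqrt p" using h by (simp add: divide_right_mono)
    also have "\<dots> \<le> glaeser_const M F h * sqrt p"
      unfolding glaeser_const_def using sqrt_p glaeser_nonneg by (simp add: algebra_simps)
    finally show ?thesis unfolding v_def p_def .
  qed
qed

section \<open>Derivative of the smallest eigenvalue\<close>

definition cubic_divided_difference :: "real \<Rightarrow> real \<Rightarrow> real \<Rightarrow> real \<Rightarrow> real" where
  "cubic_divided_difference tau m u v = u^2 + u * v + v^2 - tau * (u + v) + m"

lemma cubic_divided_difference_ge:
  assumes "0 \<le> u" "u \<le> L" "0 \<le> v" "v \<le> L" "0 \<le> tau"
  shows "m - 2 * tau * L \<le> cubic_divided_difference tau m u v"
proof -
  have "tau * (u + v) \<le> tau * (2 * L)" using assms by (intro mult_left_mono) auto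
  moreover have "0 \<le> u^2 + u * v + v^2" using assms by simp
  ultimately show ?thesis unfolding cubic_divided_difference_def by linarith
qed

text \<open>Subtracting the equations of a root \<open>r\<close> of \<open>r\<^sup>3 - \<tau> r\<^sup>2 + m r - D = 0\<close> at \<open>y\<close> and at
  \<open>x\<^sub>0\<close> expresses \<open>r y - r x\<^sub>0\<close> through the increments of the coefficients, divided by the
  divided difference of the cubic, which stays \<open>\<ge> c > 0\<close> while \<open>r\<close> stays in \<open>[0, L]\<close>.\<close>
lemma cubic_root_difference:
  fixes tau m D r :: "real \<Rightarrow> real"
  assumes root: "eventually (\<lambda>y. r y ^3 - tau y * r y^2 + m y * r y - D y = 0 \<and> 0 \<le> r y \<and> r y \<le> L) (nhds x0)"
    and c: "c \<le> m x0 - 2 * tau x0 * L" "0 \<le> tau x0"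
  shows "eventually (\<lambda>y. (r y - r x0) * cubic_divided_difference (tau x0) (m x0) (r y) (r x0)
      = (tau y - tau x0) * r y^2 - (m y - m x0) * r y + (D y - D x0)
    \<and> c \<le> cubic_divided_difference (tau x0) (m x0) (r y) (r x0) \<and> 0 \<le> r y \<and> r y \<le> L) (nhds x0)"
proof -
  have root0: "r x0 ^3 - tau x0 * r x0^2 + m x0 * r x0 - D x0 = 0" "0 \<le> r x0" "r x0 \<le> L"
    using root unfolding eventually_nhds by blast+
  from root show ?thesis
  proof eventually_elim
    case (elim y)
    then show ?case
      using root0 cubic_divided_difference_ge[of "r y" L "r x0" "tau x0" "m x0"] c
      unfolding cubic_divided_difference_def
      by (auto simp: algebra_simps power2_eq_square power3_eq_cube)
  qed
qed

lemma cubic_root_tendsto: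
  fixes tau m D r :: "real \<Rightarrow> real"
  assumes root: "eventually (\<lambda>y. r y ^3 - tau y * r y^2 + m y * r y - D y = 0 \<and> 0 \<le> r y \<and> r y \<le> L) (nhds x0)"
    and c: "0 < c" "c \<le> m x0 - 2 * tau x0 * L" "0 \<le> tau x0"
    and cont: "isCont tau x0" "isCont m x0" "isCont D x0"
  shows "(r \<longlongrightarrow> r x0) (at x0)"
proof -
  define g where "g = (\<lambda>y. (\<bar>tau y - tau x0\<bar> * L^2 + \<bar>m y - m x0\<bar> * L + \<bar>D y - D x0\<bar>) / c)"
  have "(g \<longlongrightarrow> (\<bar>tau x0 - tau x0\<bar> * L^2 + \<bar>m x0 - m x0\<bar> * L + \<bar>D x0 - D x0\<bar>) / c) (at x0)"
    unfolding g_def using cont c(1) by (intro tendsto_intros) (auto simp: isCont_def)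
  then have g_lim: "(g \<longlongrightarrow> 0) (at x0)" by simp
  have "eventually (\<lambda>y. norm (r y - r x0) \<le> g y) (nhds x0)"
    using cubic_root_difference[OF root c(2,3)]
  proof eventually_elim
    case (elim y)
    define Q where "Q = cubic_divided_difference (tau x0) (m x0) (r y) (r x0)"
    have Q: "0 < Q" "c \<le> Q" using elim c(1) unfolding Q_def by auto
    have "\<bar>r y - r x0\<bar> * Q = \<bar>(r y - r x0) * Q\<bar>" using Q by (simp add: abs_mult)
    also have "\<dots> = \<bar>(tau y - tau x0) * r y^2 - (m y - m x0) * r y + (D y - D x0)\<bar>"
      using elim unfolding Q_def by simp
    also have "\<dots> \<le> \<bar>tau y - tau x0\<bar> * r y^2 + \<bar>m y - m x0\<bar> * r y + \<bar>D y - D x0\<bar>"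
      using elim by (auto simp: abs_mult
        intro!: order_trans[OF abs_triangle_ineq] order_trans[OF abs_triangle_ineq4] add_mono)
    also have "\<dots> \<le> g y * c"
      unfolding g_def using elim c(1) by (simp, intro add_mono mult_left_mono power_mono) auto
    also have "\<dots> \<le> g y * Q"
      using Q elim c(1) by (intro mult_left_mono) (auto simp: g_def)
    finally show ?case using Q by simp
  qed
  then have "eventually (\<lambda>y. norm (r y - r x0) \<le> g y) (at x0)"
    by (simp add: eventually_nhds_conv_at)
  from Lim_null_comparison[OF this g_lim] show ?thesis by (simp add: LIM_zero_iff)
qed

lemma cubic_root_has_derivative:
  fixes tau m D r :: "real \<Rightarrow> real"
  assumes root: "eventually (\<lambda>y. r y ^3 - tau y * r y^2 + m y * r y - D y = 0 \<and> 0 \<le> r y \<and> r y \<le> L) (nhds x0)"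
    and c: "0 < c" "c \<le> m x0 - 2 * tau x0 * L" "0 \<le> tau x0"
    and dtau: "(tau has_real_derivative tau') (at x0)"
    and dm: "(m has_real_derivative m') (at x0)"
    and dD: "(D has_real_derivative D') (at x0)"
  shows "(r has_real_derivative (tau' * r x0^2 - m' * r x0 + D') / (3 * r x0^2 - 2 * tau x0 * r x0 + m x0)) (at x0)"
proof -
  define Q where "Q = (\<lambda>y. cubic_divided_difference (tau x0) (m x0) (r y) (r x0))"
  define quot where "quot = (\<lambda>y. ((tau y - tau x0) / (y - x0) * r y^2 - (m y - m x0) / (y - x0) * r y
    + (D y - D x0) / (y - x0)) / Q y)"
  have lim_r: "(r \<longlongrightarrow> r x0) (at x0)"
    using cubic_root_tendsto[OF root c] dtau dm dD by (simp add: DERIV_isCont)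
  have "Q x0 = 3 * r x0^2 - 2 * tau x0 * r x0 + m x0"
    unfolding Q_def cubic_divided_difference_def by (simp add: algebra_simps power2_eq_square)
  moreover have "c \<le> Q x0"
    using c cubic_root_difference[OF root c(2,3)] unfolding Q_def eventually_nhds by blast
  then have "(quot \<longlongrightarrow> (tau' * r x0^2 - m' * r x0 + D') / Q x0) (at x0)"
    using dtau dm dD c(1) unfolding quot_def Q_def cubic_divided_difference_def has_field_derivative_iff
    by (intro tendsto_intros lim_r) auto
  moreover have "eventually (\<lambda>y. quot y = (r y - r x0) / (y - x0)) (at x0)"
    using cubic_root_difference[OF root c(2,3), unfolded eventually_nhds_conv_at, THEN conjunct1]
  proof eventually_elim
    case (elim y)
    then have "0 < Q y" using c(1) unfolding Q_def by linarith
    with elim have "r y - r x0 = ((tau y - tau x0) * r y^2 - (m y - m x0) * r y + (D y - D x0)) / Q y"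
      unfolding Q_def by (simp add: eq_divide_eq)
    then show ?case unfolding quot_def by (simp add: divide_simps)
  qed
  ultimately show ?thesis
    unfolding has_field_derivative_iff by (simp add: Lim_transform_eventually)
qed

lemma
  fixes f :: "real \<Rightarrow> real"
  assumes "isCont f x"
  shows eventually_less_of_isCont: "f x < u \<Longrightarrow> eventually (\<lambda>y. f y < u) (nhds x)"
    and eventually_greater_of_isCont: "u < f x \<Longrightarrow> eventually (\<lambda>y. u < f y) (nhds x)"
proof -
  have "(f \<longlongrightarrow> f x) (nhds x)" using assms by (simp add: isCont_def tendsto_at_iff_tendsto_nhds)
  then show "f x < u \<Longrightarrow> eventually (\<lambda>y. f y < u) (nhds x)"
    and "u < f x \<Longrightarrow> eventually (\<lambda>y. u < f y) (nhds x)"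
    by (simp_all add: order_tendstoD)
qed

lemma lam_min_has_derivative:
  fixes A B :: "real \<Rightarrow> real"
  assumes dA: "(A has_real_derivative A') (at x)" and dB: "(B has_real_derivative B') (at x)"
    and A_pos: "0 < A x" and A_small: "A x < 1/8" and disc_pos: "0 < 4*(A x)^3 - 27*(B x)^2"
  defines "r \<equiv> lam_min (A x) (B x)"
  shows "((\<lambda>y. lam_min (A y) (B y)) has_real_derivative
      ((2 + 2*A x)*A' * r^2 - ((6 + 4*A x + 6*(A x)^2)*A' - 18*B x*B') * r
        + (12*(A x)^2*A' - 54*B x*B')) / charpoly_S_deriv (A x) (B x) r) (at x)"
proof -
  define tau where "tau = (\<lambda>y. 3 + 2*A y + (A y)^2)"
  define m where "m = (\<lambda>y. 6*A y + 2*(A y)^2 + 2*(A y)^3 - 9*(B y)^2)"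
  define D where "D = (\<lambda>y. 4*(A y)^3 - 27*(B y)^2)"
  have dtau: "(tau has_real_derivative (2 + 2*A x)*A') (at x)"
    unfolding tau_def using dA by (auto intro!: derivative_eq_intros simp: algebra_simps)
  have dm: "(m has_real_derivative (6 + 4*A x + 6*(A x)^2)*A' - 18*B x*B') (at x)"
    unfolding m_def using dA dB by (auto intro!: derivative_eq_intros simp: algebra_simps power2_eq_square)
  have dD: "(D has_real_derivative 12*(A x)^2*A' - 54*B x*B') (at x)"
    unfolding D_def using dA dB by (auto intro!: derivative_eq_intros simp: algebra_simps power2_eq_square)
  have cont_A: "isCont A x" and cont_D: "isCont D x" using dA dD by (simp_all add: DERIV_isCont)
  have "isCont (\<lambda>y. (A y)^2) x" using cont_A by (auto intro: continuous_intros)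
  then have "eventually (\<lambda>y. (A y)^2 < 3/2 * (A x)^2) (nhds x)"
    using A_pos by (intro eventually_less_of_isCont) auto
  moreover have "eventually (\<lambda>y. 0 < D y) (nhds x)"
    using disc_pos unfolding D_def by (intro eventually_greater_of_isCont[OF cont_D[unfolded D_def]])
  ultimately
  have "eventually (\<lambda>y. 0 < A y \<and> A y < 1/8 \<and> 0 < D y \<and> (A y)^2 < 3/2 * (A x)^2) (nhds x)"
    using eventually_less_of_isCont[OF cont_A A_small] eventually_greater_of_isCont[OF cont_A A_pos]
    by eventually_elim auto
  then have root: "eventually (\<lambda>y. lam_min (A y) (B y) ^3 - tau y * lam_min (A y) (B y)^2
      + m y * lam_min (A y) (B y) - D y = 0
      \<and> 0 \<le> lam_min (A y) (B y) \<and> lam_min (A y) (B y) \<le> 2*(A x)^2) (nhds x)"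
  proof eventually_elim
    case (elim y)
    then have "0 < A y" "A y \<le> 1/8" "0 < 4*(A y)^3 - 27*(B y)^2" unfolding D_def by auto
    note y_root = lam_min_root[OF this] lam_min_le[OF this]
    have "lam_min (A y) (B y) \<le> 2*(A x)^2" using y_root(4) elim by simp
    then show ?case using y_root(1,2) unfolding charpoly_S_def tau_def m_def D_def
      by (simp add: algebra_simps)
  qed
  have margin: "4 * A x \<le> m x - 2 * tau x * (2*(A x)^2)"
    using charpoly_S_coeff_margin A_pos A_small disc_pos unfolding tau_def m_def by simp
  have tau_nonneg: "0 \<le> tau x" unfolding tau_def using A_pos by (simp add: add_nonneg_nonneg)
  have "((\<lambda>y. lam_min (A y) (B y)) has_real_derivative
      ((2 + 2*A x)*A' * r^2 - ((6 + 4*A x + 6*(A x)^2)*A' - 18*B x*B') * r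
        + (12*(A x)^2*A' - 54*B x*B')) / (3 * r^2 - 2 * tau x * r + m x)) (at x)"
    using cubic_root_has_derivative[OF root _ margin tau_nonneg dtau dm dD] A_pos
    unfolding r_def by simp
  then show ?thesis unfolding charpoly_S_deriv_def tau_def m_def by simp
qed

lemma lam_min_log_deriv_bound:
  fixes A B :: "real \<Rightarrow> real"
  assumes dA: "(A has_real_derivative A') (at x)" and dB: "(B has_real_derivative B') (at x)"
    and A_pos: "0 < A x" and A_small: "A x < 1/8" and disc_pos: "0 < 4*(A x)^3 - 27*(B x)^2"
    and "\<bar>A'\<bar> \<le> Ka * sqrt (A x)" "\<bar>A'\<bar> \<le> K1" "\<bar>B'\<bar> \<le> K2"
    and "\<bar>12*(A x)^2*A' - 54*B x*B'\<bar> \<le> Kd * sqrt (4*(A x)^3 - 27*(B x)^2)"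
  shows "(\<lambda>y. lam_min (A y) (B y)) differentiable (at x)"
    and "\<bar>deriv (\<lambda>y. lam_min (A y) (B y)) x\<bar> / lam_min (A x) (B x)
      \<le> (K1 + 2*Ka + 5*K2 + 2*Kd) * (1 / sqrt (A x) + 1 / sqrt (4*(A x)^3 - 27*(B x)^2))"
proof -
  note deriv = lam_min_has_derivative[OF dA dB A_pos A_small disc_pos]
  then show "(\<lambda>y. lam_min (A y) (B y)) differentiable (at x)"
    unfolding real_differentiable_def by blast
  show "\<bar>deriv (\<lambda>y. lam_min (A y) (B y)) x\<bar> / lam_min (A x) (B x)
      \<le> (K1 + 2*Ka + 5*K2 + 2*Kd) * (1 / sqrt (A x) + 1 / sqrt (4*(A x)^3 - 27*(B x)^2))"
    unfolding DERIV_imp_deriv[OF deriv] using A_pos A_small disc_pos assms(6-9)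
    by (intro lam_min_log_deriv_le) auto
qed

lemma glaeser_inequality_disc:
  fixes A A' A'' B B' B'' :: "real \<Rightarrow> real"
  assumes h: "0 < h"
    and dA: "\<And>y. y \<in> {x-h..x+h} \<Longrightarrow> (A has_real_derivative A' y) (at y)"
    and dA1: "\<And>y. y \<in> {x-h..x+h} \<Longrightarrow> (A' has_real_derivative A'' y) (at y)"
    and dB: "\<And>y. y \<in> {x-h..x+h} \<Longrightarrow> (B has_real_derivative B' y) (at y)"
    and dB1: "\<And>y. y \<in> {x-h..x+h} \<Longrightarrow> (B' has_real_derivative B'' y) (at y)"
    and bounds: "\<And>y. y \<in> {x-h..x+h} \<Longrightarrow>
      \<bar>A y\<bar> \<le> Ma \<and> \<bar>A' y\<bar> \<le> Ma' \<and> \<bar>A'' y\<bar> \<le> Ma'' \<and> \<bar>B y\<bar> \<le> Mb \<and> \<bar>B' y\<bar> \<le> Mb' \<and> \<bar>B'' y\<bar> \<le> Mb''"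
    and nonneg: "\<And>y. y \<in> {x-h..x+h} \<Longrightarrow> 0 \<le> 4*(A y)^3 - 27*(B y)^2"
    and F: "4*(A x)^3 - 27*(B x)^2 \<le> F"
  shows "\<bar>12*(A x)^2*A' x - 54*B x*B' x\<bar>
    \<le> glaeser_const (24*Ma*Ma'^2 + 12*Ma^2*Ma'' + 54*Mb'^2 + 54*Mb*Mb'') F h * sqrt (4*(A x)^3 - 27*(B x)^2)"
proof -
  define D2 where "D2 = (\<lambda>y. 24*A y*(A' y)^2 + 12*(A y)^2*A'' y - 54*(B' y)^2 - 54*B y*B'' y)"
  have D2_le: "\<bar>D2 y\<bar> \<le> 24*Ma*Ma'^2 + 12*Ma^2*Ma'' + 54*Mb'^2 + 54*Mb*Mb''" if "y \<in> {x-h..x+h}" for y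
  proof -
    have "\<bar>D2 y\<bar> \<le> 24*(\<bar>A y\<bar>*\<bar>A' y\<bar>^2) + 12*(\<bar>A y\<bar>^2*\<bar>A'' y\<bar>) + 54*\<bar>B' y\<bar>^2 + 54*(\<bar>B y\<bar>*\<bar>B'' y\<bar>)"
    proof -
      have tri: "\<And>w x y z::real. \<bar>w + x - y - z\<bar> \<le> \<bar>w\<bar> + \<bar>x\<bar> + \<bar>y\<bar> + \<bar>z\<bar>" by arith
      show ?thesis
        using tri[of "24*A y*(A' y)^2" "12*(A y)^2*A'' y" "54*(B' y)^2" "54*B y*B'' y"]
        unfolding D2_def by (simp add: abs_mult power_abs)
    qed
    also have "\<dots> \<le> 24*(Ma*Ma'^2) + 12*(Ma^2*Ma'') + 54*Mb'^2 + 54*(Mb*Mb'')"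
      using bounds[OF that] by (intro add_mono mult_left_mono mult_mono power_mono) auto
    finally show ?thesis by simp
  qed
  have "x \<in> {x-h..x+h}" using h by simp
  from order_trans[OF abs_ge_zero D2_le[OF this]]
  show ?thesis
  proof (rule glaeser_inequality[where f = "\<lambda>y. 4*(A y)^3 - 27*(B y)^2"
      and f' = "\<lambda>y. 12*(A y)^2*A' y - 54*B y*B' y" and f'' = D2, OF h _ nonneg _ _ D2_le F])
    show "((\<lambda>y. 4*(A y)^3 - 27*(B y)^2) has_real_derivative 12*(A y)^2*A' y - 54*B y*B' y) (at y)"
      if "y \<in> {x-h..x+h}" for y
      using dA[OF that] dB[OF that] by (auto intro!: derivative_eq_intros simp: algebra_simps power2_eq_square)
    show "((\<lambda>y. 12*(A y)^2*A' y - 54*B y*B' y) has_real_derivative D2 y) (at y)"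
      if "y \<in> {x-h..x+h}" for y
      using dA[OF that] dB[OF that] dA1[OF that] dB1[OF that] unfolding D2_def
      by (auto intro!: derivative_eq_intros simp: algebra_simps power2_eq_square)
  qed
qed

lemma lam_min_log_deriv_bound_on_interval:
  fixes A A' A'' B B' B'' :: "real \<Rightarrow> real"
  assumes h: "0 < h"
    and dA: "\<And>y. y \<in> {x-h..x+h} \<Longrightarrow> (A has_real_derivative A' y) (at y)"
    and dA': "\<And>y. y \<in> {x-h..x+h} \<Longrightarrow> (A' has_real_derivative A'' y) (at y)"
    and dB: "\<And>y. y \<in> {x-h..x+h} \<Longrightarrow> (B has_real_derivative B' y) (at y)"
    and dB': "\<And>y. y \<in> {x-h..x+h} \<Longrightarrow> (B' has_real_derivative B'' y) (at y)"
    and bounds: "\<And>y. y \<in> {x-h..x+h} \<Longrightarrow>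
      \<bar>A y\<bar> \<le> Ma \<and> \<bar>A' y\<bar> \<le> Ma' \<and> \<bar>A'' y\<bar> \<le> Ma'' \<and> \<bar>B y\<bar> \<le> Mb \<and> \<bar>B' y\<bar> \<le> Mb' \<and> \<bar>B'' y\<bar> \<le> Mb''"
    and nonneg: "\<And>y. y \<in> {x-h..x+h} \<Longrightarrow> 0 \<le> A y \<and> 0 \<le> 4*(A y)^3 - 27*(B y)^2"
    and A_pos: "0 < A x" and A_small: "A x < 1/8" and disc_pos: "0 < 4*(A x)^3 - 27*(B x)^2"
  defines "Ka \<equiv> glaeser_const Ma'' (1/8) h"
    and "Kd \<equiv> glaeser_const (24*Ma*Ma'^2 + 12*Ma^2*Ma'' + 54*Mb'^2 + 54*Mb*Mb'') (1/128) h"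
  shows "(\<lambda>y. lam_min (A y) (B y)) differentiable (at x)"
    and "\<bar>deriv (\<lambda>y. lam_min (A y) (B y)) x\<bar> / lam_min (A x) (B x)
      \<le> (Ma' + 2*Ka + 5*Mb' + 2*Kd) * (1 / sqrt (A x) + 1 / sqrt (4*(A x)^3 - 27*(B x)^2))"
proof -
  have x: "x \<in> {x-h..x+h}" using h by simp
  have "\<bar>A' x\<bar> \<le> Ka * sqrt (A x)"
    unfolding Ka_def using h A_small bounds nonneg order_trans[OF abs_ge_zero] x
    by (intro glaeser_inequality[where f = A and f' = A' and f'' = A'', OF h _ _ dA dA']) force+
  moreover have "(A x)^3 \<le> (1/8)^3" using A_pos A_small by (intro power_mono) auto
  then have "(A x)^3 \<le> 1/512" by (simp add: power_divide)
  then have "4*(A x)^3 - 27*(B x)^2 \<le> 1/128" using zero_le_power2[of "B x"] by linarith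
  then have "\<bar>12*(A x)^2*A' x - 54*B x*B' x\<bar> \<le> Kd * sqrt (4*(A x)^3 - 27*(B x)^2)"
    unfolding Kd_def using nonneg by (intro glaeser_inequality_disc[OF h dA dA' dB dB' bounds]) auto
  moreover have "\<bar>A' x\<bar> \<le> Ma'" "\<bar>B' x\<bar> \<le> Mb'" using bounds[OF x] by auto
  ultimately show "(\<lambda>y. lam_min (A y) (B y)) differentiable (at x)"
    and "\<bar>deriv (\<lambda>y. lam_min (A y) (B y)) x\<bar> / lam_min (A x) (B x)
      \<le> (Ma' + 2*Ka + 5*Mb' + 2*Kd) * (1 / sqrt (A x) + 1 / sqrt (4*(A x)^3 - 27*(B x)^2))"
    using lam_min_log_deriv_bound[OF dA[OF x] dB[OF x] A_pos A_small disc_pos] by auto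
qed

section \<open>Localisation near the origin\<close>

lemma smooth_bdd_continuous_on: "smooth_bdd Om f \<Longrightarrow> continuous_on Om (\<lambda>p. f (fst p) (snd p))"
  unfolding smooth_bdd_def by (metis ipd.simps(1))

lemma smooth_bdd_x_derivatives:
  assumes "smooth_bdd Om f"
  obtains f1 f2 M0 M1 M2 where
    "\<And>t y. (t, y) \<in> Om \<Longrightarrow> ((\<lambda>y. f t y) has_real_derivative f1 t y) (at y)"
    "\<And>t y. (t, y) \<in> Om \<Longrightarrow> ((\<lambda>y. f1 t y) has_real_derivative f2 t y) (at y)"
    "\<And>t y. (t, y) \<in> Om \<Longrightarrow> \<bar>f t y\<bar> \<le> M0 \<and> \<bar>f1 t y\<bar> \<le> M1 \<and> \<bar>f2 t y\<bar> \<le> M2"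
proof -
  have deriv: "((\<lambda>y. ipd ds f t y) has_real_derivative ipd (False # ds) f t y) (at y)"
    if "(t, y) \<in> Om" for ds t y
    using assms that unfolding smooth_bdd_def by (simp add: DERIV_deriv_iff_real_differentiable)
  have "\<exists>M. \<forall>t y. (t, y) \<in> Om \<longrightarrow> \<bar>ipd ds f t y\<bar> \<le> M" for ds
    using assms unfolding smooth_bdd_def by blast
  then obtain M0 M1 M2 where
    "\<forall>t y. (t, y) \<in> Om \<longrightarrow> \<bar>ipd [] f t y\<bar> \<le> M0"
    "\<forall>t y. (t, y) \<in> Om \<longrightarrow> \<bar>ipd [False] f t y\<bar> \<le> M1"
    "\<forall>t y. (t, y) \<in> Om \<longrightarrow> \<bar>ipd [False, False] f t y\<bar> \<le> M2"
    by meson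
  with deriv[where ds = "[]"] deriv[where ds = "[False]"] show thesis
    by (intro that[of "ipd [False] f" "ipd [False, False] f" M0 M1 M2]) auto
qed

lemma lam1_log_deriv_bound_near_origin:
  fixes a b :: "real \<Rightarrow> real \<Rightarrow> real" and W :: "real set" and c T :: real
  assumes W: "open W" "0 \<in> W" and cT: "0 < c" "0 < T"
    and sa: "smooth_bdd ({-c<..<T} \<times> W) a" and sb: "smooth_bdd ({-c<..<T} \<times> W) b"
    and disc_nonneg: "\<And>t x. t \<in> {0..<T} \<Longrightarrow> x \<in> W \<Longrightarrow> Disc a b t x \<ge> 0"
    and a_origin: "a 0 0 = 0"
    and a_pos: "\<And>t x. t \<in> {0<..<T} \<Longrightarrow> x \<in> W \<Longrightarrow> a t x > 0"
  obtains U C where "open U" "(0, 0) \<in> U" "U \<subseteq> {-c<..<T} \<times> W" "0 < C"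
    "\<And>t x. (t, x) \<in> U \<Longrightarrow> a t x < 1/8"
    "\<And>t x. (t, x) \<in> U \<Longrightarrow> 0 < t \<Longrightarrow> 0 < Disc a b t x \<Longrightarrow>
       (\<lambda>y. lam1 a b t y) differentiable (at x)
       \<and> \<bar>deriv (\<lambda>y. lam1 a b t y) x\<bar> / lam1 a b t x
          \<le> C * (1 / sqrt (a t x) + 1 / sqrt (Disc a b t x))"
proof -
  define Om where "Om = {-c<..<T} \<times> W"
  obtain a1 a2 A0 A1 A2 where
    da: "\<And>t y. (t, y) \<in> Om \<Longrightarrow> (a t has_real_derivative a1 t y) (at y)" and
    da1: "\<And>t y. (t, y) \<in> Om \<Longrightarrow> (a1 t has_real_derivative a2 t y) (at y)" and
    a_bounds: "\<And>t y. (t, y) \<in> Om \<Longrightarrow> \<bar>a t y\<bar> \<le> A0 \<and> \<bar>a1 t y\<bar> \<le> A1 \<and> \<bar>a2 t y\<bar> \<le> A2"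
    using smooth_bdd_x_derivatives[OF sa] unfolding Om_def by metis
  obtain b1 b2 B0 B1 B2 where
    db: "\<And>t y. (t, y) \<in> Om \<Longrightarrow> (b t has_real_derivative b1 t y) (at y)" and
    db1: "\<And>t y. (t, y) \<in> Om \<Longrightarrow> (b1 t has_real_derivative b2 t y) (at y)" and
    b_bounds: "\<And>t y. (t, y) \<in> Om \<Longrightarrow> \<bar>b t y\<bar> \<le> B0 \<and> \<bar>b1 t y\<bar> \<le> B1 \<and> \<bar>b2 t y\<bar> \<le> B2"
    using smooth_bdd_x_derivatives[OF sb] unfolding Om_def by metis
  obtain e where e: "0 < e" "ball 0 e \<subseteq> W" using W open_contains_ball by blast
  define h where "h = e / 2"
  have h: "0 < h" unfolding h_def using e by simp
  define Ka where "Ka = glaeser_const \<bar>A2\<bar> (1/8) h"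
  define Kd where "Kd = glaeser_const (24*\<bar>A0\<bar>*\<bar>A1\<bar>^2 + 12*\<bar>A0\<bar>^2*\<bar>A2\<bar> + 54*\<bar>B1\<bar>^2 + 54*\<bar>B0\<bar>*\<bar>B2\<bar>) (1/128) h"
  define C where "C = \<bar>A1\<bar> + 2*Ka + 5*\<bar>B1\<bar> + 2*Kd"
  have "0 < Ka" "0 < Kd" unfolding Ka_def Kd_def using h by (simp_all add: glaeser_const_pos)
  then have C: "0 < C" unfolding C_def by simp
  define U where "U = (Om \<inter> (\<lambda>p. a (fst p) (snd p)) -` {..<1/8}) \<inter> UNIV \<times> {-h<..<h}"
  have "open Om" unfolding Om_def using W by (intro open_Times) auto
  then have open_sublevel: "open (Om \<inter> (\<lambda>p. a (fst p) (snd p)) -` {..<1/8})"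
    using smooth_bdd_continuous_on[OF sa] unfolding Om_def by (intro continuous_open_preimage) auto
  then have "open U" unfolding U_def by (intro open_Int[OF open_sublevel] open_Times) auto
  moreover have "(0, 0) \<in> U" unfolding U_def Om_def using W cT a_origin h by auto
  moreover have "U \<subseteq> {-c<..<T} \<times> W" unfolding U_def Om_def by auto
  moreover have U_small: "a t x < 1/8" if "(t, x) \<in> U" for t x using that unfolding U_def by auto
  moreover note C
  moreover have "(\<lambda>y. lam1 a b t y) differentiable (at x)
       \<and> \<bar>deriv (\<lambda>y. lam1 a b t y) x\<bar> / lam1 a b t x \<le> C * (1 / sqrt (a t x) + 1 / sqrt (Disc a b t x))"
    if U: "(t, x) \<in> U" and t: "0 < t" and disc_pos: "0 < Disc a b t x" for t x
  proof -
    have x: "\<bar>x\<bar> < h" "(t, x) \<in> Om" "t < T" using U unfolding U_def Om_def by auto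
    have slice: "(t, y) \<in> Om" "y \<in> W" if "y \<in> {x-h..x+h}" for y
    proof -
      have "\<bar>y\<bar> < e" using that x(1) unfolding h_def by auto
      then show "y \<in> W" using e(2) by (auto simp: subset_iff dist_real_def)
      then show "(t, y) \<in> Om" using x(2) unfolding Om_def by auto
    qed
    have ax: "0 < a t x" "a t x < 1/8" using a_pos x U_small[OF U] t unfolding Om_def by auto
    have "\<bar>a t y\<bar> \<le> \<bar>A0\<bar> \<and> \<bar>a1 t y\<bar> \<le> \<bar>A1\<bar> \<and> \<bar>a2 t y\<bar> \<le> \<bar>A2\<bar>
        \<and> \<bar>b t y\<bar> \<le> \<bar>B0\<bar> \<and> \<bar>b1 t y\<bar> \<le> \<bar>B1\<bar> \<and> \<bar>b2 t y\<bar> \<le> \<bar>B2\<bar>"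
      and "0 \<le> a t y \<and> 0 \<le> 4*(a t y)^3 - 27*(b t y)^2" if "y \<in> {x-h..x+h}" for y
      using a_bounds[OF slice(1)[OF that]] b_bounds[OF slice(1)[OF that]]
        a_pos[of t y] disc_nonneg[of t y] slice(2)[OF that] t x(3)
      unfolding Disc_def by force+
    from lam_min_log_deriv_bound_on_interval[where A = "a t" and B = "b t", OF h
        da[OF slice(1)] da1[OF slice(1)] db[OF slice(1)] db1[OF slice(1)] this ax] disc_pos
    show ?thesis unfolding lam1_eq_lam_min Disc_def C_def Ka_def Kd_def by simp
  qed
  ultimately show thesis using that by blast
qed

theorem lemma3p3:
  fixes a b :: "real \<Rightarrow> real \<Rightarrow> real" and W :: "real set" and c T :: real
  assumes "open W" and "is_interval W" and "0 \<in> W"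
    and "c > 0" and "T > 0"
    and "smooth_bdd ({-c<..<T} \<times> W) a"
    and "smooth_bdd ({-c<..<T} \<times> W) b"
    and "\<And>t x. t \<in> {0..<T} \<Longrightarrow> x \<in> W \<Longrightarrow> Disc a b t x \<ge> 0"
    and "a 0 0 = 0"
    and "\<And>t x. t \<in> {0<..<T} \<Longrightarrow> x \<in> W \<Longrightarrow> a t x > 0"
  shows "\<exists>U C. open U \<and> (0, 0) \<in> U \<and> U \<subseteq> {-c<..<T} \<times> W \<and> C > 0
    \<and> (\<forall>t x. (t, x) \<in> U \<and> t > 0 \<and> Disc a b t x > 0 \<longrightarrow>
          (\<lambda>y. lam1 a b t y) differentiable (at x)
        \<and> \<bar>deriv (\<lambda>y. lam1 a b t y) x\<bar> / lam1 a b t x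
            \<le> C * (1 / sqrt (a t x) + 1 / sqrt (Disc a b t x)))
    \<and> (\<forall>(\<omega> :: (real \<times> real) set) (\<phi> :: real \<Rightarrow> real \<Rightarrow> real) C0.
         \<omega> \<subseteq> U \<inter> {p. fst p > 0}
       \<and> (\<forall>t x. (t, x) \<in> \<omega> \<longrightarrow> \<phi> t x > 0)
       \<and> C0 > 0
       \<and> (\<forall>t x. (t, x) \<in> \<omega> \<longrightarrow> (\<phi> t x)\<^sup>2 * a t x \<le> C0 * Disc a b t x)
       \<longrightarrow> (\<exists>C'. C' > 0 \<and> (\<forall>t x. (t, x) \<in> \<omega> \<and> Disc a b t x > 0 \<longrightarrow>
              \<bar>deriv (\<lambda>y. lam1 a b t y) x\<bar> / lam1 a b t x \<le> C' / (\<phi> t x * sqrt (a t x)))))"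
proof -
  obtain U C where U: "open U" "(0, 0) \<in> U" "U \<subseteq> {-c<..<T} \<times> W" "0 < C"
    and U_small: "\<And>t x. (t, x) \<in> U \<Longrightarrow> a t x < 1/8"
    and bound: "\<And>t x. (t, x) \<in> U \<Longrightarrow> 0 < t \<Longrightarrow> 0 < Disc a b t x \<Longrightarrow>
       (\<lambda>y. lam1 a b t y) differentiable (at x)
       \<and> \<bar>deriv (\<lambda>y. lam1 a b t y) x\<bar> / lam1 a b t x \<le> C * (1 / sqrt (a t x) + 1 / sqrt (Disc a b t x))"
    using lam1_log_deriv_bound_near_origin[OF assms(1,3-10)] by blast
  have weighted: "\<bar>deriv (\<lambda>y. lam1 a b t y) x\<bar> / lam1 a b t x \<le> 2 * C * sqrt C0 / (p * sqrt (a t x))"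
    if tx: "(t, x) \<in> U" "0 < t" "0 < Disc a b t x"
      and p: "0 < p" "0 < C0" "p^2 * a t x \<le> C0 * Disc a b t x" for t x p C0
  proof -
    have "0 < a t x" "a t x \<le> 1/8" using assms(10) U(3) U_small tx by force+
    then have "1 / sqrt (a t x) + 1 / sqrt (Disc a b t x) \<le> 2 * sqrt C0 / (p * sqrt (a t x))"
      using inv_sqrt_add_inv_sqrt_disc_le p tx(3) unfolding Disc_def by simp
    then have "C * (1 / sqrt (a t x) + 1 / sqrt (Disc a b t x)) \<le> C * (2 * sqrt C0 / (p * sqrt (a t x)))"
      using U(4) by (intro mult_left_mono) auto
    with bound[OF tx] have "\<bar>deriv (\<lambda>y. lam1 a b t y) x\<bar> / lam1 a b t x \<le> C * (2 * sqrt C0 / (p * sqrt (a t x)))"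
      by linarith
    then show ?thesis by (simp add: ac_simps)
  qed
  show ?thesis
    apply (rule exI[of _ U], rule exI[of _ C], intro conjI U allI impI)
    subgoal using bound by blast
    subgoal using bound by blast
    subgoal for \<omega> \<phi> C0 using U(4) by (intro exI[of _ "2 * C * sqrt C0"]) (auto intro!: weighted)
    done
qed

end
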